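(* Consider the free pre-Lie algebra with one generator, realized as $(\mathcal{T},\to)$. A monomial basis of $(\mathcal{T},\to)$ is tree-grounded if and only if there is a section $S$ of the forget-planarity projection $\pi:\mathcal{T}^{pl}\to\mathcal{T}$ such that the basis consists exactly of the monomials $m_{S(t)}$, $t\in T$, where for a planar rooted tree $\sigma$, $m_\sigma$ denotes the unique monomial whose evaluation in $(\mathcal{T}^{pl},\circ\!\!\searrow)$ equals $\sigma$; in that case the basis vectors (evaluations in $(\mathcal{T},\to)$) are the elements $\widetilde{\Psi}_S(t)=\pi\circ\Psi\circ S(t)$, $t\in T$.
   Context: $\mathcal{T}$ is the vector space spanned by the set $T$ of non-planar rooted trees, $\mathcal{T}^{pl}$ the space spanned by planar rooted trees, $\pi$ the linear forget-planarity projection; a section of $\pi$ is a linear map $S:\mathcal{T}\to\mathcal{T}^{pl}$ sending each tree $t$ to a planar tree with $\pi(S(t))=t$. The grafting $s\to t=\sum_{v\in V(t)}s\to_v t$ (graft the root of $s$ by a new edge onto vertex $v$ of $t$) makes $\mathcal{T}$ the free pre-Lie algebra on the one-vertex tree $\bullet$. The Butcher product on non-planar trees is $s\circ\!\!\rightarrow B_+(t_1\cdots t_k)=B_+(s\,t_1\cdots t_k)$, where $B_+$ attaches the roots of the given trees to a new root; on planar trees the left Butcher product $\sigma\circ\!\!\searrow B_+(\tau_1\cdots\tau_k)=B_+(\sigma\tau_1\cdots\tau_k)$ inserts $\sigma$ as leftmost branch, and $(\mathcal{T}^{pl},\circ\!\!\searrow)$ is the free magmatic algebra on $\bullet$. The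 left grafting on planar trees is $\sigma\searrow\tau=\sum_{v\in V(\tau)}\sigma\searrow_v\tau$ (graft $\sigma$ at $v$ as the leftmost branch), and $\Psi:\mathcal{T}^{pl}\to\mathcal{T}^{pl}$ is the linear map with $\Psi(\bullet)=\bullet$, $\Psi(\sigma_1\circ\!\!\searrow\sigma_2)=\Psi(\sigma_1)\searrow\Psi(\sigma_2)$. A monomial $m$ is a parenthesized word built from the letter $\bullet$ and one binary operation; $m(\bullet,\to)$, $m(\bullet,\circ\!\!\rightarrow)$, $m(\bullet,\circ\!\!\searrow)$ denote its evaluations using grafting, Butcher product, left Butcher product respectively. A monomial basis is a set of monomials whose evaluations $m(\bullet,\to)$ form a basis of $\mathcal{T}$. It is tree-grounded if the trees $m(\bullet,\circ\!\!\rightarrow)$ (its "lower-energy terms"), for $m$ in the set, are exactly the rooted trees of $T$, each obtained once. *)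

theory Defs
  imports Main HOL.Modules "HOL-Library.Multiset" "HOL-Library.Function_Algebras"
begin

datatype tree = Node "tree multiset"

datatype ptree = PNode "ptree list"

text \<open>Monomials: parenthesized words in the letter bullet and one binary operation.\<close>
datatype mon = Dot | Op mon mon

abbreviation bullet :: tree where "bullet \<equiv> Node {#}"
abbreviation pbullet :: ptree where "pbullet \<equiv> PNode []"

primrec pi :: "ptree \<Rightarrow> tree" where
  "pi (PNode cs) = Node (mset (map pi cs))"

section \<open>Vectors: finitely supported coefficient functions\<close>

definition supp :: "('a \<Rightarrow> 'k::zero) \<Rightarrow> 'a set" where
  "supp u = {x. u x \<noteq> 0}"

definition bas :: "'a \<Rightarrow> 'a \<Rightarrow> 'k::{zero,one}" where
  "bas t = (\<lambda>z. if z = t then 1 else 0)"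

definition vec_of_mset :: "'a multiset \<Rightarrow> 'a \<Rightarrow> 'k::semiring_1" where
  "vec_of_mset M = (\<lambda>z. of_nat (count M z))"

definition lin :: "('a \<Rightarrow> 'b \<Rightarrow> 'k::comm_ring_1) \<Rightarrow> ('a \<Rightarrow> 'k) \<Rightarrow> 'b \<Rightarrow> 'k" where
  "lin f u = (\<lambda>z. \<Sum>x\<in>supp u. u x * f x z)"

definition bilin :: "('a \<Rightarrow> 'b \<Rightarrow> 'c \<Rightarrow> 'k::comm_ring_1) \<Rightarrow> ('a \<Rightarrow> 'k) \<Rightarrow> ('b \<Rightarrow> 'k) \<Rightarrow> 'c \<Rightarrow> 'k" where
  "bilin f u v = (\<lambda>z. \<Sum>x\<in>supp u. \<Sum>y\<in>supp v. u x * v y * f x y z)"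

definition scl :: "'k::field \<Rightarrow> ('a \<Rightarrow> 'k) \<Rightarrow> 'a \<Rightarrow> 'k" where
  "scl c u = (\<lambda>x. c * u x)"

lemma size_mem_tree: "c \<in># ts \<Longrightarrow> size c < Suc (size_multiset size ts)"
proof -
  assume "c \<in># ts"
  then obtain M where "ts = add_mset c M" by (blast dest: multi_member_split)
  then show ?thesis by simp
qed

text \<open>Grafting: the multiset of all trees \<open>s \<rightarrow>\<^sub>v t\<close>, v ranging over the vertices of t.\<close>
function graft :: "tree \<Rightarrow> tree \<Rightarrow> tree multiset" where
  "graft s (Node ts) =
     add_mset (Node (add_mset s ts))
       (\<Sum>\<^sub># (image_mset (\<lambda>c. image_mset (\<lambda>r. Node (add_mset r (ts - {#c#}))) (graft s c)) ts))"
  by pat_completeness auto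
termination
  by (relation "measure (\<lambda>(s, t). size t)") (auto simp: size_mem_tree)

fun butcher :: "tree \<Rightarrow> tree \<Rightarrow> tree" where
  "butcher s (Node ts) = Node (add_mset s ts)"

fun lbutcher :: "ptree \<Rightarrow> ptree \<Rightarrow> ptree" where
  "lbutcher \<sigma> (PNode cs) = PNode (\<sigma> # cs)"

lemma size_mem_ptree: "c \<in> set cs \<Longrightarrow> size c < Suc (size_list size cs)"
  by (induct cs) auto

text \<open>Left grafting on planar trees: the multiset of all \<open>\<sigma> \<searrow>\<^sub>v \<tau>\<close>
  (graft \<open>\<sigma>\<close> at vertex v of \<open>\<tau>\<close> as leftmost branch).\<close>
function lgraft :: "ptree \<Rightarrow> ptree \<Rightarrow> ptree multiset" where
  "lgraft \<sigma> (PNode cs) =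
     add_mset (PNode (\<sigma> # cs))
       (\<Sum>\<^sub># (mset (map (\<lambda>(i, c). image_mset (\<lambda>r. PNode (cs[i := r])) (lgraft \<sigma> c))
                       (zip [0..<length cs] cs))))"
  by pat_completeness auto
termination
  by (relation "measure (\<lambda>(s, t). size t)") (auto simp: size_mem_ptree dest: set_zip_rightD)

definition graftV :: "(tree \<Rightarrow> 'k::field) \<Rightarrow> (tree \<Rightarrow> 'k) \<Rightarrow> tree \<Rightarrow> 'k" where
  "graftV = bilin (\<lambda>s t. vec_of_mset (graft s t))"

definition lgraftV :: "(ptree \<Rightarrow> 'k::field) \<Rightarrow> (ptree \<Rightarrow> 'k) \<Rightarrow> ptree \<Rightarrow> 'k" where
  "lgraftV = bilin (\<lambda>s t. vec_of_mset (lgraft s t))"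

definition piV :: "(ptree \<Rightarrow> 'k::field) \<Rightarrow> tree \<Rightarrow> 'k" where
  "piV = lin (\<lambda>\<sigma>. bas (pi \<sigma>))"

primrec ev_graft :: "mon \<Rightarrow> tree \<Rightarrow> 'k::field" where
  "ev_graft Dot = bas bullet"
| "ev_graft (Op a b) = graftV (ev_graft a) (ev_graft b)"

primrec ev_butcher :: "mon \<Rightarrow> tree" where
  "ev_butcher Dot = bullet"
| "ev_butcher (Op a b) = butcher (ev_butcher a) (ev_butcher b)"

primrec ev_lbutcher :: "mon \<Rightarrow> ptree" where
  "ev_lbutcher Dot = pbullet"
| "ev_lbutcher (Op a b) = lbutcher (ev_lbutcher a) (ev_lbutcher b)"

definition mon_of :: "ptree \<Rightarrow> mon" where
  "mon_of \<sigma> = (THE m. ev_lbutcher m = \<sigma>)"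

text \<open>\<open>\<Psi>(\<bullet>) = \<bullet>\<close>, \<open>\<Psi>(\<sigma>\<^sub>1 \<circ>\<searrow> \<sigma>\<^sub>2) = \<Psi>(\<sigma>\<^sub>1) \<searrow> \<Psi>(\<sigma>\<^sub>2)\<close>; note
  \<open>PNode (c # cs) = c \<circ>\<searrow> PNode cs\<close>.\<close>
fun Psi :: "ptree \<Rightarrow> ptree \<Rightarrow> 'k::field" where
  "Psi (PNode []) = bas pbullet"
| "Psi (PNode (c # cs)) = lgraftV (Psi c) (Psi (PNode cs))"

text \<open>A set of monomials whose evaluations in (T, grafting) form a basis of the space of
  finitely supported coefficient functions on T (the family is indexed by B, hence injective).\<close>
definition monomial_basis :: "'k::field itself \<Rightarrow> mon set \<Rightarrow> bool" where
  "monomial_basis _ B \<longleftrightarrow>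
     inj_on (ev_graft :: mon \<Rightarrow> tree \<Rightarrow> 'k) B
     \<and> \<not> module.dependent (scl :: 'k \<Rightarrow> _) ((ev_graft :: mon \<Rightarrow> tree \<Rightarrow> 'k) ` B)
     \<and> module.span (scl :: 'k \<Rightarrow> _) ((ev_graft :: mon \<Rightarrow> tree \<Rightarrow> 'k) ` B)
         = {u :: tree \<Rightarrow> 'k. finite (supp u)}"

text \<open>Tree-grounded: the lower-energy terms are exactly the trees of T, each obtained once.\<close>
definition tree_grounded :: "mon set \<Rightarrow> bool" where
  "tree_grounded B \<longleftrightarrow> bij_betw ev_butcher B (UNIV :: tree set)"

definition is_section :: "(tree \<Rightarrow> ptree) \<Rightarrow> bool" where
  "is_section S \<longleftrightarrow> (\<forall>t. pi (S t) = t)"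

end

theory Submission
  imports Defs
begin

text \<open>The left Butcher product makes planar trees the free magma on \<open>\<bullet>\<close>, so
  \<open>m \<mapsto> m(\<bullet>, \<circ>\<searrow>)\<close> identifies monomials with planar trees, and \<open>m(\<bullet>, \<circ>\<rightarrow>)\<close> is the
  image of that planar tree under \<open>\<pi>\<close>. Hence the lower-energy terms of a set of monomials
  enumerate \<open>T\<close> exactly once iff its planar trees are the values of a section of \<open>\<pi>\<close>.
  Forgetting planarity turns \<open>\<sigma> \<searrow>\<^sub>v \<tau>\<close> into \<open>\<pi> \<sigma> \<rightarrow>\<^sub>v \<pi> \<tau>\<close>, so \<open>\<pi>\<close> intertwines left
  grafting with grafting, and by induction on \<open>m\<close> we get \<open>m(\<bullet>, \<rightarrow>) = \<pi>(\<Psi>(m(\<bullet>, \<circ>\<searrow>)))\<close>.\<close>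

lemma supp_bas [simp]: "supp (bas a :: _ \<Rightarrow> 'k::zero_neq_one) = {a}"
  by (auto simp: supp_def bas_def)

lemma lin_eq_sum_superset:
  assumes "finite A" "supp u \<subseteq> A"
  shows "lin f u z = (\<Sum>x\<in>A. u x * f x z)"
  unfolding lin_def using assms by (auto intro!: sum.mono_neutral_left simp: supp_def)

lemma bilin_eq_sum_superset:
  assumes "finite A" "supp u \<subseteq> A" "finite C" "supp v \<subseteq> C"
  shows "bilin f u v z = (\<Sum>x\<in>A. \<Sum>y\<in>C. u x * v y * f x y z)"
  unfolding bilin_def using assms
  by (intro sum.mono_neutral_cong_left) (auto intro!: sum.mono_neutral_left simp: supp_def)

lemma lin_bas_bas: "lin (\<lambda>x. bas (f x)) (bas a :: _ \<Rightarrow> 'k::comm_ring_1) = bas (f a)"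
  by (simp add: lin_def fun_eq_iff) (simp add: bas_def)

lemma supp_lin_bas: "supp (lin (\<lambda>x. bas (f x)) u :: _ \<Rightarrow> 'k::comm_ring_1) \<subseteq> f ` supp u"
  by (force simp: supp_def lin_def bas_def intro: sum.neutral)

lemma supp_bilin_vec_of_mset:
  "supp (bilin (\<lambda>x y. vec_of_mset (P x y)) u v :: _ \<Rightarrow> 'k::comm_ring_1)
     \<subseteq> (\<Union>x\<in>supp u. \<Union>y\<in>supp v. set_mset (P x y))"
proof (rule subsetI, rule ccontr)
  fix z
  assume z: "z \<in> supp (bilin (\<lambda>x y. vec_of_mset (P x y)) u v :: _ \<Rightarrow> 'k)"
    and "z \<notin> (\<Union>x\<in>supp u. \<Union>y\<in>supp v. set_mset (P x y))"
  then have "\<forall>x\<in>supp u. \<forall>y\<in>supp v. count (P x y) z = 0"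
    by (simp add: count_eq_zero_iff)
  then have "bilin (\<lambda>x y. vec_of_mset (P x y)) u v z = (0 :: 'k)"
    by (simp add: bilin_def vec_of_mset_def)
  with z show False
    by (simp add: supp_def)
qed

lemma sum_lin_bas:
  assumes "finite U" "supp u \<subseteq> U"
  shows "(\<Sum>s\<in>f ` U. lin (\<lambda>x. bas (f x)) u s * g s) = (\<Sum>x\<in>U. u x * (g (f x) :: 'k::comm_ring_1))"
proof -
  have "(\<Sum>s\<in>f ` U. lin (\<lambda>x. bas (f x)) u s * g s) = (\<Sum>s\<in>f ` U. \<Sum>x\<in>U. u x * (bas (f x) s * g s))"
    using assms by (simp add: lin_eq_sum_superset sum_distrib_right mult.assoc)
  also have "\<dots> = (\<Sum>x\<in>U. \<Sum>s\<in>f ` U. if f x = s then u x * g s else 0)"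
    by (subst sum.swap) (auto simp: bas_def intro!: sum.cong)
  also have "\<dots> = (\<Sum>x\<in>U. u x * g (f x))"
    using assms by simp
  finally show ?thesis .
qed

lemma sum_count_bas:
  assumes "finite A" "set_mset M \<subseteq> A"
  shows "(\<Sum>w\<in>A. of_nat (count M w) * bas (f w) z) = (of_nat (count (image_mset f M) z) :: 'k::comm_ring_1)"
proof -
  have "(\<Sum>w\<in>A. of_nat (count M w) * bas (f w) z) = (\<Sum>w\<in>{w\<in>A. f w = z}. (of_nat (count M w) :: 'k))"
    using assms by (auto simp: bas_def sum.inter_filter intro!: sum.cong)
  also have "\<dots> = (\<Sum>w\<in>f -` {z} \<inter> set_mset M. of_nat (count M w))"
    using assms by (intro sum.mono_neutral_right) (auto simp: not_in_iff)
  finally show ?thesis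
    by (simp add: count_image_mset of_nat_sum)
qed

lemma finite_supp_bilin_vec_of_mset:
  "finite (supp u) \<Longrightarrow> finite (supp v) \<Longrightarrow>
     finite (supp (bilin (\<lambda>x y. vec_of_mset (P x y)) u v :: _ \<Rightarrow> 'k::comm_ring_1))"
  by (rule finite_subset[OF supp_bilin_vec_of_mset]) auto

lemma lin_bas_bilin_vec_of_mset:
  fixes u :: "'a \<Rightarrow> 'k::comm_ring_1" and v :: "'b \<Rightarrow> 'k"
  assumes fu: "finite (supp u)" and fv: "finite (supp v)"
    and compat: "\<And>x y. image_mset f (P x y) = Q (g x) (h y)"
  shows "lin (\<lambda>w. bas (f w)) (bilin (\<lambda>x y. vec_of_mset (P x y)) u v)
       = bilin (\<lambda>s t. vec_of_mset (Q s t)) (lin (\<lambda>x. bas (g x)) u) (lin (\<lambda>y. bas (h y)) v)"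
proof
  fix z
  let ?U = "supp u" and ?V = "supp v"
  let ?W = "\<Union>x\<in>?U. \<Union>y\<in>?V. set_mset (P x y)"
  have "lin (\<lambda>w. bas (f w)) (bilin (\<lambda>x y. vec_of_mset (P x y)) u v) z
      = (\<Sum>w\<in>?W. \<Sum>x\<in>?U. \<Sum>y\<in>?V. u x * v y * (of_nat (count (P x y) w) * bas (f w) z))"
    using fu fv
    by (subst lin_eq_sum_superset[OF _ supp_bilin_vec_of_mset])
       (simp_all add: bilin_def vec_of_mset_def sum_distrib_right mult.assoc)
  also have "\<dots> = (\<Sum>x\<in>?U. \<Sum>y\<in>?V. u x * v y * (\<Sum>w\<in>?W. of_nat (count (P x y) w) * bas (f w) z))"
    by (simp add: sum_distrib_left sum.swap[of _ ?W])
  also have "\<dots> = (\<Sum>x\<in>?U. \<Sum>y\<in>?V. u x * (v y * of_nat (count (Q (g x) (h y)) z)))"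
    using fu fv by (intro sum.cong refl) (subst sum_count_bas, auto simp: compat mult.assoc)
  also have "\<dots> = (\<Sum>x\<in>?U. u x *
                      (\<Sum>t\<in>h ` ?V. lin (\<lambda>y. bas (h y)) v t * of_nat (count (Q (g x) t) z)))"
    using fv by (simp add: sum_lin_bas sum_distrib_left)
  also have "\<dots> = (\<Sum>s\<in>g ` ?U. lin (\<lambda>x. bas (g x)) u s *
                      (\<Sum>t\<in>h ` ?V. lin (\<lambda>y. bas (h y)) v t * of_nat (count (Q s t) z)))"
    using fu by (simp add: sum_lin_bas)
  also have "\<dots> = bilin (\<lambda>s t. vec_of_mset (Q s t)) (lin (\<lambda>x. bas (g x)) u) (lin (\<lambda>y. bas (h y)) v) z"
    using fu fv
    by (subst bilin_eq_sum_superset[OF _ supp_lin_bas _ supp_lin_bas])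
       (simp_all add: vec_of_mset_def sum_distrib_left mult.assoc)
  finally show "lin (\<lambda>w. bas (f w)) (bilin (\<lambda>x y. vec_of_mset (P x y)) u v) z = \<dots>" .
qed

lemma image_mset_sum_mset: "image_mset f (\<Sum>\<^sub># M) = \<Sum>\<^sub># (image_mset (image_mset f) M)"
  by (induct M) auto

lemma pi_lgraft: "image_mset pi (lgraft \<sigma> \<tau>) = graft (pi \<sigma>) (pi \<tau>)"
proof (induct \<tau>)
  case (PNode cs)
  define branch where
    "branch = (\<lambda>c. image_mset (\<lambda>r. Node (add_mset r (mset (map pi cs) - {#c#}))) (graft (pi \<sigma>) c))"
  define lbranch where
    "lbranch = (\<lambda>(i, c). image_mset (\<lambda>r. PNode (cs[i := r])) (lgraft \<sigma> c))"
  let ?zs = "zip [0..<length cs] cs"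
  have "image_mset pi (lbranch (i, cs ! i)) = branch (pi (cs ! i))" if "i < length cs" for i
  proof -
    have "image_mset pi (lbranch (i, cs ! i))
        = image_mset (\<lambda>r. Node (add_mset r (mset (map pi cs) - {#pi (cs ! i)#}))) (image_mset pi (lgraft \<sigma> (cs ! i)))"
      using that by (simp add: lbranch_def multiset.map_comp o_def map_update mset_update)
    then show ?thesis
      using that PNode by (simp add: branch_def)
  qed
  then have branches: "map (image_mset pi \<circ> lbranch) ?zs = map (branch \<circ> pi \<circ> snd) ?zs"
    by (auto simp: set_zip)
  have "image_mset pi (lgraft \<sigma> (PNode cs))
      = add_mset (pi (PNode (\<sigma> # cs))) (\<Sum>\<^sub># (mset (map (image_mset pi \<circ> lbranch) ?zs)))"
    by (simp add: lbranch_def image_mset_sum_mset multiset.map_comp)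
  also have "\<dots> = add_mset (pi (PNode (\<sigma> # cs))) (\<Sum>\<^sub># (mset (map (branch \<circ> pi) cs)))"
    unfolding branches map_map[symmetric, of "branch \<circ> pi" snd] by simp
  also have "\<dots> = graft (pi \<sigma>) (pi (PNode cs))"
    by (simp add: branch_def multiset.map_comp)
  finally show ?case .
qed

lemma piV_lgraftV:
  "finite (supp u) \<Longrightarrow> finite (supp v) \<Longrightarrow>
     piV (lgraftV u v :: ptree \<Rightarrow> 'k::field) = graftV (piV u) (piV v)"
  unfolding piV_def lgraftV_def graftV_def by (rule lin_bas_bilin_vec_of_mset) (simp_all add: pi_lgraft)

lemma finite_supp_Psi: "finite (supp (Psi \<sigma> :: ptree \<Rightarrow> 'k::field))"
  by (induct \<sigma> rule: Psi.induct) (simp_all add: lgraftV_def finite_supp_bilin_vec_of_mset)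

lemma ev_graft_eq_piV_Psi: "(ev_graft m :: tree \<Rightarrow> 'k::field) = piV (Psi (ev_lbutcher m))"
proof (induct m)
  case Dot
  show ?case by (simp add: piV_def lin_bas_bas)
next
  case (Op a b)
  obtain cs where "ev_lbutcher b = PNode cs"
    by (cases "ev_lbutcher b")
  with Op show ?case
    by (simp add: piV_lgraftV finite_supp_Psi)
qed

lemma lbutcher_neq_pbullet: "lbutcher \<sigma> \<tau> \<noteq> pbullet"
  by (cases \<tau>) simp

lemma lbutcher_inject: "lbutcher \<sigma> \<tau> = lbutcher \<sigma>' \<tau>' \<longleftrightarrow> \<sigma> = \<sigma>' \<and> \<tau> = \<tau>'"
  by (cases \<tau>; cases \<tau>') simp

lemma pi_lbutcher: "pi (lbutcher \<sigma> \<tau>) = butcher (pi \<sigma>) (pi \<tau>)"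
  by (cases \<tau>) simp

lemma inj_ev_lbutcher: "inj ev_lbutcher"
proof (rule injI)
  show "ev_lbutcher m = ev_lbutcher m' \<Longrightarrow> m = m'" for m m'
  proof (induct m arbitrary: m')
    case Dot
    then show ?case
      by (cases m') (simp_all add: lbutcher_neq_pbullet[symmetric])
  next
    case (Op a b)
    then show ?case
      by (cases m') (simp_all add: lbutcher_inject lbutcher_neq_pbullet)
  qed
qed

lemma surj_ev_lbutcher: "surj ev_lbutcher"
proof -
  \<comment> \<open>\<open>Psi.induct\<close> is induction along \<open>PNode (c # cs) = lbutcher c (PNode cs)\<close>.\<close>
  have "\<exists>m. ev_lbutcher m = \<sigma>" for \<sigma>
  proof (induct \<sigma> rule: Psi.induct)
    case 1
    show ?case by (rule exI[of _ Dot]) simp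
  next
    case (2 c cs)
    then obtain a b where "ev_lbutcher a = c" "ev_lbutcher b = PNode cs" by blast
    then show ?case by (intro exI[of _ "Op a b"]) simp
  qed
  then show ?thesis by (metis surj_def)
qed

lemma mon_of_ev_lbutcher [simp]: "mon_of (ev_lbutcher m) = m"
  unfolding mon_of_def using inj_ev_lbutcher by (auto dest: injD)

lemma ev_lbutcher_mon_of [simp]: "ev_lbutcher (mon_of \<sigma>) = \<sigma>"
  using surj_ev_lbutcher by (metis mon_of_ev_lbutcher surjD)

lemma ev_butcher_eq_pi_ev_lbutcher: "ev_butcher m = pi (ev_lbutcher m)"
  by (induct m) (simp_all add: pi_lbutcher)

lemma tree_grounded_iff_section:
  "tree_grounded B \<longleftrightarrow> (\<exists>S. is_section S \<and> B = (\<lambda>t. mon_of (S t)) ` UNIV)"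
proof
  assume "tree_grounded B"
  then have bij: "bij_betw ev_butcher B UNIV"
    by (simp add: tree_grounded_def)
  define S where "S t = ev_lbutcher (inv_into B ev_butcher t)" for t
  have "is_section S"
    using bij by (simp add: is_section_def S_def bij_betw_inv_into_right flip: ev_butcher_eq_pi_ev_lbutcher)
  moreover have "(\<lambda>t. mon_of (S t)) ` UNIV = B"
    using bij_betw_inv_into[OF bij] by (simp add: S_def bij_betw_def)
  ultimately show "\<exists>S. is_section S \<and> B = (\<lambda>t. mon_of (S t)) ` UNIV"
    by blast
next
  assume "\<exists>S. is_section S \<and> B = (\<lambda>t. mon_of (S t)) ` UNIV"
  then obtain S where "is_section S" and B: "B = (\<lambda>t. mon_of (S t)) ` UNIV"
    by blast
  then have "ev_butcher (mon_of (S t)) = t" for t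
    by (simp add: ev_butcher_eq_pi_ev_lbutcher is_section_def)
  then show "tree_grounded B"
    unfolding tree_grounded_def B by (intro bij_betw_imageI inj_onI) (auto simp: image_iff)
qed

theorem lemma3p4:
  fixes B :: "mon set"
  assumes "monomial_basis TYPE('k::field_char_0) B"
  shows "(tree_grounded B \<longleftrightarrow>
            (\<exists>S. is_section S \<and> B = (\<lambda>t. mon_of (S t)) ` UNIV))
       \<and> (\<forall>S. is_section S \<and> B = (\<lambda>t. mon_of (S t)) ` UNIV \<longrightarrow>
            (\<forall>t. (ev_graft (mon_of (S t)) :: tree \<Rightarrow> 'k) = piV (Psi (S t))))"
  by (simp add: tree_grounded_iff_section ev_graft_eq_piV_Psi)

end
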